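(* Let $x$ be a sequence of length $n$, let $i\in\{1,\ldots,n-1\}$ and $y=\tau(x,i)$. Suppose $x[i]<x[i+1]$. Then: (1) $\overleftarrow{b_y}=1$; (2) $\overrightarrow{b_y}=0$ if $\overrightarrow{a_x}=0$, and $\overrightarrow{b_y}=\overrightarrow{a_x}+1$ otherwise; (3) $\overleftarrow{a_y}=0$ if $\overleftarrow{b_x}=0$, and $\overleftarrow{a_y}=\overleftarrow{b_x}-1$ otherwise; (4) $\overrightarrow{a_y}\le i-1$ if $\overrightarrow{a_x}=0$, and $\overrightarrow{a_y}\le\overrightarrow{a_x}$ otherwise.
   Context: Sequences are finite sequences of pairwise distinct integers indexed from $1$. For $1\le i\le n-1$, $\tau(x,i)$ is the sequence obtained from $x$ by exchanging $x[i]$ and $x[i+1]$. The parent-distance table of $x$ is $\overrightarrow{PD}_x[k]=k-\max\{j<k : x[j]<x[k]\}$ if such $j$ exists and $0$ otherwise; the reverse parent-distance table is $\overleftarrow{PD}_x[k]=\min\{j : k<j\le n,\ x[j]<x[k]\}-k$ if such $j$ exists and $0$ otherwise. Notation (for $z\in\{x,y\}$): $\overrightarrow{a_z}=\overrightarrow{PD}_z[i]$, $\overrightarrow{b_z}=\overrightarrow{PD}_z[i+1]$, $\overleftarrow{a_z}=\overleftarrow{PD}_z[i+1]$, $\overleftarrow{b_z}=\overleftarrow{PD}_z[i]$ (in the reverse tables, $a$ refers to position $i+1$ and $b$ to position $i$). *)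

theory Defs
  imports Main
begin

(* Sequences are lists of pairwise distinct integers; positions are 1-indexed:
   the k-th element (1 <= k <= length x) is  x ! (k - 1). *)

definition nth1 :: "int list \<Rightarrow> nat \<Rightarrow> int" where
  "nth1 x k = x ! (k - 1)"

(* tau(x,i): exchange x[i] and x[i+1] (1-indexed), for 1 <= i <= n-1 *)
definition tau :: "int list \<Rightarrow> nat \<Rightarrow> int list" where
  "tau x i = (x[i - 1 := nth1 x (i + 1)])[i := nth1 x i]"

definition fwdPD :: "int list \<Rightarrow> nat \<Rightarrow> nat" where
  "fwdPD x k = (if \<exists>j. 1 \<le> j \<and> j < k \<and> nth1 x j < nth1 x k
                then k - Max {j. 1 \<le> j \<and> j < k \<and> nth1 x j < nth1 x k}
                else 0)"

definition revPD :: "int list \<Rightarrow> nat \<Rightarrow> nat" where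
  "revPD x k = (if \<exists>j. k < j \<and> j \<le> length x \<and> nth1 x j < nth1 x k
                then Min {j. k < j \<and> j \<le> length x \<and> nth1 x j < nth1 x k} - k
                else 0)"

end

theory Submission
  imports Defs
begin

text \<open>Both parent-distance tables are determined by the sets of positions holding a smaller
  value before (resp. after) a position. Exchanging the increasing pair \<open>x[i] < x[i+1]\<close> moves
  the value \<open>x[i]\<close> one step to the right without changing its sets of smaller predecessors and
  successors, so its distances shift by one; the value \<open>x[i+1]\<close> moves one step to the left, gains
  \<open>x[i]\<close> as its immediate successor, and can only gain smaller predecessors.\<close>

definition fwd_parents :: "int list \<Rightarrow> nat \<Rightarrow> nat set" where
  "fwd_parents x k = {j. 1 \<le> j \<and> j < k \<and> nth1 x j < nth1 x k}"

definition rev_parents :: "int list \<Rightarrow> nat \<Rightarrow> nat set" where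
  "rev_parents x k = {j. k < j \<and> j \<le> length x \<and> nth1 x j < nth1 x k}"

lemma finite_fwd_parents: "finite (fwd_parents x k)"
  unfolding fwd_parents_def by simp

lemma finite_rev_parents: "finite (rev_parents x k)"
  unfolding rev_parents_def by simp

lemma fwdPD_eq: "fwdPD x k = (if fwd_parents x k = {} then 0 else k - Max (fwd_parents x k))"
  unfolding fwdPD_def fwd_parents_def by auto

lemma revPD_eq: "revPD x k = (if rev_parents x k = {} then 0 else Min (rev_parents x k) - k)"
  unfolding revPD_def rev_parents_def by auto

lemma Max_fwd_parents:
  assumes "fwd_parents x k \<noteq> {}"
  shows "1 \<le> Max (fwd_parents x k) \<and> Max (fwd_parents x k) < k"
  using Max_in[OF finite_fwd_parents assms] unfolding fwd_parents_def by blast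

lemma fwdPD_le: "fwdPD x k \<le> k - 1"
  using Max_fwd_parents[of x k] by (cases "fwd_parents x k = {}") (auto simp: fwdPD_eq)

lemma fwdPD_eq_0_iff: "fwdPD x k = 0 \<longleftrightarrow> fwd_parents x k = {}"
  using Max_fwd_parents[of x k] by (cases "fwd_parents x k = {}") (auto simp: fwdPD_eq)

lemma fwdPD_Suc_if_same_parents:
  assumes "fwd_parents y (Suc k) = fwd_parents x k"
  shows "fwdPD y (Suc k) = (if fwdPD x k = 0 then 0 else fwdPD x k + 1)"
  using Max_fwd_parents[of x k] by (cases "fwd_parents x k = {}") (auto simp: fwdPD_eq assms)

lemma fwdPD_le_if_parents_subset:
  assumes "fwd_parents x k \<subseteq> fwd_parents y k" and "fwd_parents x k \<noteq> {}"
  shows "fwdPD y k \<le> fwdPD x k"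
proof -
  have "Max (fwd_parents x k) \<le> Max (fwd_parents y k)"
    using assms finite_fwd_parents by (rule_tac Max_mono) auto
  then show ?thesis
    using assms by (auto simp: fwdPD_eq)
qed

text \<open>No side condition on the minimum is needed: truncated subtraction gives
  \<open>(m - k) - 1 = m - Suc k\<close> for every \<open>m\<close>.\<close>
lemma revPD_Suc_if_same_parents:
  assumes "rev_parents y (Suc k) = rev_parents x k"
  shows "revPD y (Suc k) = (if revPD x k = 0 then 0 else revPD x k - 1)"
proof (cases "rev_parents x k = {}")
  case False
  then have "k < Min (rev_parents x k)"
    using Min_in[OF finite_rev_parents False] unfolding rev_parents_def by blast
  with False show ?thesis
    by (simp add: revPD_eq assms)
qed (simp add: revPD_eq assms)

lemma revPD_eq_1_if_descent:
  assumes "Suc k \<le> length x" and "nth1 x (Suc k) < nth1 x k"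
  shows "revPD x k = 1"
proof -
  have "Min (rev_parents x k) = Suc k"
    by (rule Min_eqI) (use assms in \<open>auto simp: rev_parents_def finite_rev_parents\<close>)
  moreover have "Suc k \<in> rev_parents x k"
    using assms by (simp add: rev_parents_def)
  ultimately show ?thesis
    by (auto simp: revPD_eq)
qed

lemma length_tau [simp]: "length (tau x i) = length x"
  unfolding tau_def by simp

lemma nth1_tau:
  assumes "1 \<le> i" "Suc i \<le> length x" "1 \<le> j"
  shows "nth1 (tau x i) j =
    (if j = i then nth1 x (Suc i) else if j = Suc i then nth1 x i else nth1 x j)"
  using assms unfolding tau_def nth1_def
  by (cases "j = i"; cases "j = Suc i"; auto simp: nth_list_update)

context
  fixes x :: "int list" and i :: nat
  assumes i_pos: "1 \<le> i" and i_less: "Suc i \<le> length x"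
    and ascent: "nth1 x i < nth1 x (Suc i)"
begin

private lemma nth1_tau_simps:
  "nth1 (tau x i) i = nth1 x (Suc i)"
  "nth1 (tau x i) (Suc i) = nth1 x i"
  "1 \<le> j \<Longrightarrow> j \<noteq> i \<Longrightarrow> j \<noteq> Suc i \<Longrightarrow> nth1 (tau x i) j = nth1 x j"
  using nth1_tau[OF i_pos i_less] i_pos by auto

lemma fwd_parents_tau_Suc: "fwd_parents (tau x i) (Suc i) = fwd_parents x i"
  using ascent by (auto simp: fwd_parents_def nth1_tau_simps less_Suc_eq)

lemma fwd_parents_subset_tau: "fwd_parents x i \<subseteq> fwd_parents (tau x i) i"
  using ascent by (auto simp: fwd_parents_def nth1_tau_simps)

lemma rev_parents_tau_Suc: "rev_parents (tau x i) (Suc i) = rev_parents x i"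
proof (rule set_eqI)
  fix j
  show "j \<in> rev_parents (tau x i) (Suc i) \<longleftrightarrow> j \<in> rev_parents x i"
    using ascent i_pos by (cases "j = Suc i") (auto simp: rev_parents_def nth1_tau_simps)
qed

lemma revPD_tau: "revPD (tau x i) i = 1"
  using ascent i_less by (intro revPD_eq_1_if_descent) (simp_all add: nth1_tau_simps)

end

theorem lemma1:
  fixes x y :: "int list" and n i :: nat
  assumes "distinct x"
    and "length x = n"
    and "1 \<le> i" and "i \<le> n - 1"
    and "y = tau x i"
    and "nth1 x i < nth1 x (i + 1)"
  shows "revPD y i = 1
       \<and> fwdPD y (i + 1) = (if fwdPD x i = 0 then 0 else fwdPD x i + 1)
       \<and> revPD y (i + 1) = (if revPD x i = 0 then 0 else revPD x i - 1)
       \<and> (if fwdPD x i = 0 then fwdPD y i \<le> i - 1 else fwdPD y i \<le> fwdPD x i)"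
proof -
  have ascent: "1 \<le> i" "Suc i \<le> length x" "nth1 x i < nth1 x (Suc i)"
    using assms by auto
  have "fwdPD y i \<le> fwdPD x i" if "fwdPD x i \<noteq> 0"
    using fwdPD_le_if_parents_subset[OF fwd_parents_subset_tau[OF ascent]] that
    by (simp add: assms(5) fwdPD_eq_0_iff)
  then show ?thesis
    using fwdPD_le[of y i] revPD_tau[OF ascent]
      fwdPD_Suc_if_same_parents[OF fwd_parents_tau_Suc[OF ascent]]
      revPD_Suc_if_same_parents[OF rev_parents_tau_Suc[OF ascent]]
    by (simp add: assms(5))
qed

end
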